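(* Let $k\ge 2$ be an integer. There exists $\Delta_c(k)\ge 3$ such that for every integer $\Delta\ge 2$: the independent set model has uniqueness on $\mathbb{T}_{k,\Delta}$ whenever $\Delta<\Delta_c(k)$, and non-uniqueness whenever $\Delta>\Delta_c(k)$.
   Context: $\mathbb{T}_{k,\Delta}$ is the infinite $(\Delta-1)$-ary $k$-uniform hypertree with root $\rho$: recursively, each vertex has $\Delta-1$ descending hyperedges, each consisting of that vertex together with $k-1$ new vertices. For $n\ge 0$, $\mathbb{T}(n)$ is the sub-hypergraph induced by vertices at distance at most $n$ from $\rho$, and $L_n$ is the set of vertices at distance exactly $n$ from $\rho$. An independent set (vertex subset containing no hyperedge) is identified with $\sigma$, $\sigma(v)=1$ iff $v$ is in the set; $\mu_n$ is the uniform distribution on independent sets of $\mathbb{T}(n)$. The model has uniqueness on $\mathbb{T}_{k,\Delta}$ iff $\limsup_{n\to\infty}\max_{\eta,\eta':L_n\to\{0,1\}}|\mu_n(\sigma_\rho=1\mid\sigma_{L_n}=\eta)-\mu_n(\sigma_\rho=1\mid\sigma_{L_n}=\eta')|=0$, and non-uniqueness otherwise. *)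

theory Defs
  imports "HOL-Analysis.Analysis" "HOL-Library.Liminf_Limsup"
begin

text \<open>Vertices of the infinite (Delta-1)-ary k-uniform hypertree are encoded as lists
  of pairs (i,j): the vertex v @ [(i,j)] is the j-th new vertex (j < k-1) of the i-th
  descending hyperedge (i < Delta-1) of v.  The root is the empty list.  The hypergraph
  distance of a vertex from the root equals the length of its list.\<close>

definition tree_verts :: "nat \<Rightarrow> nat \<Rightarrow> (nat \<times> nat) list set" where
  "tree_verts k \<Delta> = {v. \<forall>(i,j)\<in>set v. i < \<Delta> - 1 \<and> j < k - 1}"

definition hedge :: "nat \<Rightarrow> (nat \<times> nat) list \<Rightarrow> nat \<Rightarrow> (nat \<times> nat) list set" where
  "hedge k v i = insert v {v @ [(i,j)] | j. j < k - 1}"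

definition tree_edges :: "nat \<Rightarrow> nat \<Rightarrow> (nat \<times> nat) list set set" where
  "tree_edges k \<Delta> = {hedge k v i | v i. v \<in> tree_verts k \<Delta> \<and> i < \<Delta> - 1}"

definition trunc_verts :: "nat \<Rightarrow> nat \<Rightarrow> nat \<Rightarrow> (nat \<times> nat) list set" where
  "trunc_verts k \<Delta> n = {v \<in> tree_verts k \<Delta>. length v \<le> n}"

definition trunc_edges :: "nat \<Rightarrow> nat \<Rightarrow> nat \<Rightarrow> (nat \<times> nat) list set set" where
  "trunc_edges k \<Delta> n = {e \<in> tree_edges k \<Delta>. e \<subseteq> trunc_verts k \<Delta> n}"

definition level :: "nat \<Rightarrow> nat \<Rightarrow> nat \<Rightarrow> (nat \<times> nat) list set" where
  "level k \<Delta> n = {v \<in> tree_verts k \<Delta>. length v = n}"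

text \<open>Independent sets of T(n) (identified with configurations sigma).\<close>
definition indep_sets :: "nat \<Rightarrow> nat \<Rightarrow> nat \<Rightarrow> (nat \<times> nat) list set set" where
  "indep_sets k \<Delta> n = {S. S \<subseteq> trunc_verts k \<Delta> n \<and> (\<forall>e\<in>trunc_edges k \<Delta> n. \<not> e \<subseteq> S)}"

text \<open>mu_n(sigma_rho = 1 | sigma_{L_n} = eta) for the uniform distribution on independent
  sets of T(n); a boundary condition eta : L_n \<rightarrow> {0,1} is identified with the subset
  of L_n where it equals 1.\<close>
definition root_prob :: "nat \<Rightarrow> nat \<Rightarrow> nat \<Rightarrow> (nat \<times> nat) list set \<Rightarrow> real" where
  "root_prob k \<Delta> n \<eta> =
     real (card {S \<in> indep_sets k \<Delta> n. [] \<in> S \<and> S \<inter> level k \<Delta> n = \<eta>}) /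
     real (card {S \<in> indep_sets k \<Delta> n. S \<inter> level k \<Delta> n = \<eta>})"

definition max_influence :: "nat \<Rightarrow> nat \<Rightarrow> nat \<Rightarrow> real" where
  "max_influence k \<Delta> n = Max {\<bar>root_prob k \<Delta> n \<eta> - root_prob k \<Delta> n \<eta>'\<bar> | \<eta> \<eta>'.
      \<eta> \<subseteq> level k \<Delta> n \<and> \<eta>' \<subseteq> level k \<Delta> n}"

definition uniqueness :: "nat \<Rightarrow> nat \<Rightarrow> bool" where
  "uniqueness k \<Delta> \<longleftrightarrow> limsup (\<lambda>n. ereal (max_influence k \<Delta> n)) = 0"

end

theory Submission
  imports Defs
begin

text \<open>
  The root probability obeys a tree recursion: the occupation probability of the root of
  \<open>T(n+1)\<close> is a function \<open>bp_step\<close> of the occupation probabilities of the roots of its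
  \<open>(\<Delta>-1)(k-1)\<close> subtrees of depth \<open>n\<close>.  The recursion is antitone in every argument, so the
  extreme boundary conditions are the all-free and the all-occupied one, and they produce the
  orbits of \<open>0\<close> and \<open>1\<close> under the scalar map \<open>F(x) = h/(1+h)\<close>, \<open>h = (1-x^(k-1))^(\<Delta>-1)\<close>.
  Since \<open>F(1) = 0\<close>, these are one orbit shifted by a step, so the maximal influence at depth
  \<open>n+1\<close> is the step \<open>|F^(n+1)(0) - F^n(0)|\<close>.  The even iterates increase and the odd ones
  decrease; they have a common limit unless \<open>F\<close> has a 2-cycle \<open>x < y\<close>, \<open>y \<le> F x\<close>,
  \<open>F y \<le> x\<close>, which traps them apart.  So uniqueness holds iff there is no 2-cycle.

  For \<open>\<Delta> = 2\<close> the map is a contraction, and for large \<open>\<Delta>\<close> there is a 2-cycle.  A 2-cycle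
  persists when \<open>\<Delta>\<close> grows: in logit coordinates the cycle conditions read
  \<open>d B(x) \<le> L(y)\<close> and \<open>L(x) \<le> d B(y)\<close> with \<open>L(t) = ln((1-t)/t)\<close>, \<open>B(t) = -ln(1-t^(k-1))\<close>,
  and multiplying them compares the potential \<open>L B\<close> at \<open>x\<close> and \<open>y\<close>; this potential is
  unimodal on \<open>(0, 1/2)\<close>, which lets one move \<open>x\<close> down to a 2-cycle of the larger degree.
  Hence the critical value is the least \<open>\<Delta>\<close> with non-uniqueness.
\<close>

lemma frac_one_plus_mono: "0 \<le> (a::real) \<Longrightarrow> a \<le> b \<Longrightarrow> a / (1 + a) \<le> b / (1 + b)"
  by (simp add: field_simps)

lemma frac_one_plus_le: "0 \<le> (a::real) \<Longrightarrow> a / (1 + a) \<le> a"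
  using mult_nonneg_nonneg[of a a] by (simp add: divide_le_eq algebra_simps)

lemma power_diff_le_diff:
  fixes x y :: real
  assumes "0 \<le> x" "x \<le> y" "y \<le> 1 / 2"
  shows "y ^ Suc n - x ^ Suc n \<le> y - x"
proof (induction n)
  case (Suc n)
  have "y ^ Suc (Suc n) - x ^ Suc (Suc n) = y * (y ^ Suc n - x ^ Suc n) + x ^ Suc n * (y - x)"
    by (simp add: algebra_simps)
  also have "\<dots> \<le> (1 / 2) * (y - x) + (1 / 2) * (y - x)"
  proof (rule add_mono)
    show "y * (y ^ Suc n - x ^ Suc n) \<le> (1 / 2) * (y - x)"
      using Suc assms power_mono[OF assms(2,1), of "Suc n"] by (intro mult_mono) auto
    have "x ^ Suc n \<le> x"
      using assms power_decreasing[of 1 "Suc n" x] by simp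
    then show "x ^ Suc n * (y - x) \<le> (1 / 2) * (y - x)"
      using assms by (intro mult_right_mono) auto
  qed
  finally show ?case by simp
qed simp

lemma power_less_one_pos: "0 < t \<Longrightarrow> t < 1 \<Longrightarrow> m \<ge> 1 \<Longrightarrow> t ^ m < (1::real)"
  by (simp add: power_less_one_iff)

lemma DERIV_power_div:
  assumes "(t::real) \<noteq> 0"
  shows "((\<lambda>t. t ^ m) has_real_derivative real m * t ^ m / t) (at t)"
proof (cases m)
  case (Suc n)
  then show ?thesis using DERIV_pow[of m t] assms by simp
qed simp

lemma abs_diff_le_between:
  fixes a b x y :: "'a :: linordered_idom"
  assumes "min a b \<le> x \<and> x \<le> max a b" and "min a b \<le> y \<and> y \<le> max a b"
  shows "\<bar>x - y\<bar> \<le> \<bar>a - b\<bar>"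
  using assms unfolding abs_le_iff min_def max_def by (cases "a \<le> b") (auto simp: abs_if)

lemma LIMSEQ_even_odd:
  fixes X :: "nat \<Rightarrow> 'a :: real_normed_vector"
  assumes "(\<lambda>n. X (2 * n)) \<longlonglongrightarrow> L" and "(\<lambda>n. X (2 * n + 1)) \<longlonglongrightarrow> L"
  shows "X \<longlonglongrightarrow> L"
proof (rule LIMSEQ_I)
  fix r :: real assume "0 < r"
  obtain N1 N2 where "\<forall>n\<ge>N1. norm (X (2 * n) - L) < r" and "\<forall>n\<ge>N2. norm (X (2 * n + 1) - L) < r"
    using LIMSEQ_D[OF assms(1) \<open>0 < r\<close>] LIMSEQ_D[OF assms(2) \<open>0 < r\<close>] by blast
  then have "norm (X n - L) < r" if "n \<ge> 2 * max N1 N2" for n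
    using that by (cases "even n") (auto elim!: evenE oddE)
  then show "\<exists>N. \<forall>n\<ge>N. norm (X n - L) < r" by blast
qed

lemma prod_diff_eq_prod_mult:
  fixes T M :: "'a \<Rightarrow> 'b :: field"
  assumes "\<And>j. j \<in> A \<Longrightarrow> T j \<noteq> 0"
  shows "prod T A - prod M A = prod T A * (1 - (\<Prod>j\<in>A. M j / T j))"
proof -
  have "prod T A \<noteq> 0"
    using assms by (induction A rule: infinite_finite_induct) auto
  then show ?thesis
    by (simp add: prod_dividef right_diff_distrib)
qed

lemma logistic_le_iff: "1 / (1 + exp a) \<le> 1 / (1 + exp b) \<longleftrightarrow> b \<le> (a::real)"
  by (simp add: add_pos_pos divide_le_eq)

section \<open>Independent sets of the truncated hypertree\<close>

definition subtree :: "nat \<times> nat \<Rightarrow> (nat \<times> nat) list set \<Rightarrow> (nat \<times> nat) list set" where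
  "subtree c S = {w. c # w \<in> S}"

lemma Nil_in_trunc_verts [simp]: "[] \<in> trunc_verts k \<Delta> n"
  by (simp add: trunc_verts_def tree_verts_def)

lemma Cons_in_trunc_verts_Suc [simp]:
  "c # w \<in> trunc_verts k \<Delta> (Suc n) \<longleftrightarrow> fst c < \<Delta> - 1 \<and> snd c < k - 1 \<and> w \<in> trunc_verts k \<Delta> n"
  by (cases c) (auto simp: trunc_verts_def tree_verts_def)

lemma trunc_verts_0: "trunc_verts k \<Delta> 0 = {[]}"
  by (auto simp: trunc_verts_def tree_verts_def)

lemma Nil_in_level [simp]: "[] \<in> level k \<Delta> n \<longleftrightarrow> n = 0"
  by (auto simp: level_def tree_verts_def)

lemma Cons_in_level_Suc [simp]:
  "c # w \<in> level k \<Delta> (Suc n) \<longleftrightarrow> fst c < \<Delta> - 1 \<and> snd c < k - 1 \<and> w \<in> level k \<Delta> n"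
  by (cases c) (auto simp: level_def tree_verts_def)

lemma level_0: "level k \<Delta> 0 = {[]}"
  by (auto simp: level_def tree_verts_def)

lemma level_subset_trunc_verts: "level k \<Delta> n \<subseteq> trunc_verts k \<Delta> n"
  by (auto simp: level_def trunc_verts_def)

lemma subtree_level_Suc:
  "fst c < \<Delta> - 1 \<Longrightarrow> snd c < k - 1 \<Longrightarrow> subtree c (level k \<Delta> (Suc n)) = level k \<Delta> n"
  by (auto simp: subtree_def)

lemma subtree_subset_level:
  "\<eta> \<subseteq> level k \<Delta> (Suc n) \<Longrightarrow> subtree c \<eta> \<subseteq> level k \<Delta> n"
  by (auto simp: subtree_def)

lemma hedge_Cons: "hedge k (c # v) i = (#) c ` hedge k v i"
  by (auto simp: hedge_def)

lemma base_in_hedge: "v \<in> hedge k v i"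
  by (simp add: hedge_def)

lemma child_in_hedge: "k \<ge> 2 \<Longrightarrow> v @ [(i, 0)] \<in> hedge k v i"
  by (auto simp: hedge_def)

lemma mem_trunc_edges_iff: "e \<in> trunc_edges k \<Delta> n \<longleftrightarrow>
   (\<exists>v i. v \<in> tree_verts k \<Delta> \<and> i < \<Delta> - 1 \<and> e = hedge k v i \<and> hedge k v i \<subseteq> trunc_verts k \<Delta> n)"
  by (auto simp: trunc_edges_def tree_edges_def)

lemma finite_trunc_verts: "finite (trunc_verts k \<Delta> n)"
proof (rule finite_subset)
  show "trunc_verts k \<Delta> n \<subseteq> {xs. set xs \<subseteq> {..<\<Delta> - 1} \<times> {..<k - 1} \<and> length xs \<le> n}"
    by (auto simp: trunc_verts_def tree_verts_def)
qed (rule finite_lists_length_le, auto)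

lemma finite_level: "finite (level k \<Delta> n)"
  using finite_subset[OF level_subset_trunc_verts finite_trunc_verts] .

lemma finite_indep_sets: "finite (indep_sets k \<Delta> n)"
  by (rule finite_subset[of _ "Pow (trunc_verts k \<Delta> n)"])
     (auto simp: indep_sets_def finite_trunc_verts)

text \<open>Every hyperedge meets two consecutive levels, so no subset of a single level contains one.\<close>
lemma subset_level_in_indep_sets:
  assumes "k \<ge> 2" and "\<eta> \<subseteq> level k \<Delta> n"
  shows "\<eta> \<in> indep_sets k \<Delta> n"
proof -
  have "\<not> hedge k v i \<subseteq> \<eta>" for v i
  proof
    assume "hedge k v i \<subseteq> \<eta>"
    then have "length v = n" "length (v @ [(i, 0)]) = n"
      using assms base_in_hedge[of v k i] child_in_hedge[of k v i] by (auto simp: level_def)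
    then show False by simp
  qed
  then show ?thesis
    using assms level_subset_trunc_verts by (fastforce simp: indep_sets_def mem_trunc_edges_iff)
qed

lemma indep_sets_0: "k \<ge> 2 \<Longrightarrow> indep_sets k \<Delta> 0 = Pow {[]}"
  using subset_level_in_indep_sets[of k _ \<Delta> 0]
  by (auto simp: indep_sets_def trunc_verts_0 level_0)

lemma hedge_Cons_subset_trunc_verts_Suc:
  "hedge k (c # w) i \<subseteq> trunc_verts k \<Delta> (Suc n) \<longleftrightarrow>
     fst c < \<Delta> - 1 \<and> snd c < k - 1 \<and> hedge k w i \<subseteq> trunc_verts k \<Delta> n"
  using base_in_hedge[of w k i] by (auto simp: hedge_Cons)

lemma trunc_edges_Suc:
  "trunc_edges k \<Delta> (Suc n) = {hedge k [] i | i. i < \<Delta> - 1} \<union>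
     {(#) c ` e | c e. fst c < \<Delta> - 1 \<and> snd c < k - 1 \<and> e \<in> trunc_edges k \<Delta> n}"
  (is "?L = ?R")
proof
  show "?L \<subseteq> ?R"
  proof
    fix e assume "e \<in> ?L"
    then obtain v i where v: "v \<in> tree_verts k \<Delta>" "i < \<Delta> - 1" "e = hedge k v i"
      "hedge k v i \<subseteq> trunc_verts k \<Delta> (Suc n)"
      by (auto simp: mem_trunc_edges_iff)
    show "e \<in> ?R"
    proof (cases v)
      case (Cons c w)
      then have c: "fst c < \<Delta> - 1" "snd c < k - 1"
        and "hedge k w i \<subseteq> trunc_verts k \<Delta> n"
        using v(4) by (simp_all add: hedge_Cons_subset_trunc_verts_Suc)
      then have "hedge k w i \<in> trunc_edges k \<Delta> n"
        using v Cons by (auto simp: mem_trunc_edges_iff tree_verts_def)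
      then show ?thesis
        using v(3) Cons c by (auto simp: hedge_Cons)
    qed (use v in auto)
  qed
next
  have "hedge k [] i \<in> ?L" if "i < \<Delta> - 1" for i
    unfolding mem_trunc_edges_iff using that
    by (intro exI[of _ "[]"] exI[of _ i]) (auto simp: hedge_def tree_verts_def trunc_verts_def)
  moreover have "(#) c ` e \<in> ?L"
    if c: "fst c < \<Delta> - 1" "snd c < k - 1" and e: "e \<in> trunc_edges k \<Delta> n" for c e
  proof -
    obtain w i where w: "w \<in> tree_verts k \<Delta>" "i < \<Delta> - 1" "e = hedge k w i"
      "hedge k w i \<subseteq> trunc_verts k \<Delta> n"
      using e by (auto simp: mem_trunc_edges_iff)
    then show ?thesis
      unfolding mem_trunc_edges_iff using c
      by (intro exI[of _ "c # w"] exI[of _ i])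
         (auto simp: hedge_Cons hedge_Cons_subset_trunc_verts_Suc tree_verts_def)
  qed
  ultimately show "?R \<subseteq> ?L" by blast
qed

lemma subtree_subset_trunc_verts:
  "S \<subseteq> trunc_verts k \<Delta> (Suc n) \<Longrightarrow> subtree c S \<subseteq> trunc_verts k \<Delta> n"
  by (cases c) (auto simp: subtree_def)

lemma child_bounds_of_subtree:
  "S \<subseteq> trunc_verts k \<Delta> (Suc n) \<Longrightarrow> w \<in> subtree c S \<Longrightarrow> fst c < \<Delta> - 1 \<and> snd c < k - 1"
  by (auto simp: subtree_def)

lemma indep_sets_Suc_iff:
  "S \<in> indep_sets k \<Delta> (Suc n) \<longleftrightarrow> S \<subseteq> trunc_verts k \<Delta> (Suc n) \<and>
     (\<forall>c. subtree c S \<in> indep_sets k \<Delta> n) \<and> ([] \<in> S \<longrightarrow> (\<forall>i<\<Delta> - 1. \<exists>j<k - 1. [(i, j)] \<notin> S))"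
  (is "_ \<longleftrightarrow> ?R")
proof -
  have root_edge: "hedge k [] i \<subseteq> S \<longleftrightarrow> [] \<in> S \<and> (\<forall>j<k - 1. [(i, j)] \<in> S)" for i
    by (auto simp: hedge_def)
  have child_edge: "(#) c ` e \<subseteq> S \<longleftrightarrow> e \<subseteq> subtree c S" for c e
    by (auto simp: subtree_def)
  show ?thesis
  proof
    assume S: "S \<in> indep_sets k \<Delta> (Suc n)"
    then have SV: "S \<subseteq> trunc_verts k \<Delta> (Suc n)"
      and no_edge: "\<And>e. e \<in> trunc_edges k \<Delta> (Suc n) \<Longrightarrow> \<not> e \<subseteq> S"
      by (auto simp: indep_sets_def)
    have "\<not> e \<subseteq> subtree c S" if edge: "e \<in> trunc_edges k \<Delta> n" for c e
    proof
      assume e: "e \<subseteq> subtree c S"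
      obtain v i where "e = hedge k v i"
        using edge by (auto simp: mem_trunc_edges_iff)
      then have "fst c < \<Delta> - 1 \<and> snd c < k - 1"
        using child_bounds_of_subtree[OF SV] e base_in_hedge by blast
      then have "(#) c ` e \<in> trunc_edges k \<Delta> (Suc n)"
        using edge unfolding trunc_edges_Suc by blast
      with e show False using no_edge child_edge by blast
    qed
    then have "subtree c S \<in> indep_sets k \<Delta> n" for c
      using subtree_subset_trunc_verts[OF SV] by (auto simp: indep_sets_def)
    moreover have "[] \<in> S \<longrightarrow> (\<forall>i<\<Delta> - 1. \<exists>j<k - 1. [(i, j)] \<notin> S)"
    proof (intro impI allI)
      fix i assume "[] \<in> S" "i < \<Delta> - 1"
      then have "\<not> hedge k [] i \<subseteq> S"
        using no_edge unfolding trunc_edges_Suc by blast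
      then show "\<exists>j<k - 1. [(i, j)] \<notin> S" using \<open>[] \<in> S\<close> root_edge by blast
    qed
    ultimately show "?R" using SV by blast
  next
    assume R: "?R"
    have "\<not> e \<subseteq> S" if "e \<in> trunc_edges k \<Delta> (Suc n)" for e
      using that R unfolding trunc_edges_Suc by (auto simp: root_edge child_edge indep_sets_def)
    then show "S \<in> indep_sets k \<Delta> (Suc n)"
      using R by (auto simp: indep_sets_def)
  qed
qed

lemma boundary_Suc_iff:
  assumes S: "S \<subseteq> trunc_verts k \<Delta> (Suc n)" and \<eta>: "\<eta> \<subseteq> level k \<Delta> (Suc n)"
  shows "S \<inter> level k \<Delta> (Suc n) = \<eta> \<longleftrightarrow> (\<forall>c. subtree c S \<inter> level k \<Delta> n = subtree c \<eta>)"
proof -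
  have Cons_iff: "c # w \<in> S \<inter> level k \<Delta> (Suc n) \<longleftrightarrow> w \<in> subtree c S \<inter> level k \<Delta> n"
    and Cons_iff': "c # w \<in> \<eta> \<longleftrightarrow> w \<in> subtree c \<eta>" for c w
    using S by (auto simp: subtree_def)
  have "[] \<notin> S \<inter> level k \<Delta> (Suc n)" "[] \<notin> \<eta>"
    using \<eta> by auto
  then have "S \<inter> level k \<Delta> (Suc n) = \<eta> \<longleftrightarrow>
      (\<forall>c w. c # w \<in> S \<inter> level k \<Delta> (Suc n) \<longleftrightarrow> c # w \<in> \<eta>)"
    by (metis (no_types, opaque_lifting) list.exhaust set_eqI)
  also have "\<dots> \<longleftrightarrow> (\<forall>c. subtree c S \<inter> level k \<Delta> n = subtree c \<eta>)"
    unfolding Cons_iff Cons_iff' set_eq_iff by blast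
  finally show ?thesis .
qed

section \<open>The tree recursion for the root probability\<close>

definition indep_bdry :: "nat \<Rightarrow> nat \<Rightarrow> nat \<Rightarrow> (nat \<times> nat) list set \<Rightarrow> (nat \<times> nat) list set set" where
  "indep_bdry k \<Delta> n \<eta> = {S \<in> indep_sets k \<Delta> n. S \<inter> level k \<Delta> n = \<eta>}"

definition indep_bdry_root ::
    "nat \<Rightarrow> nat \<Rightarrow> nat \<Rightarrow> (nat \<times> nat) list set \<Rightarrow> bool \<Rightarrow> (nat \<times> nat) list set set" where
  "indep_bdry_root k \<Delta> n \<eta> b = {S \<in> indep_bdry k \<Delta> n \<eta>. [] \<in> S \<longleftrightarrow> b}"

lemma root_prob_eq_card:
  "root_prob k \<Delta> n \<eta> = real (card (indep_bdry_root k \<Delta> n \<eta> True)) / real (card (indep_bdry k \<Delta> n \<eta>))"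
  unfolding root_prob_def indep_bdry_root_def indep_bdry_def by (metis (lifting) mem_Collect_eq)

lemma finite_indep_bdry: "finite (indep_bdry k \<Delta> n \<eta>)"
  unfolding indep_bdry_def by (rule finite_subset[OF _ finite_indep_sets]) auto

lemma finite_indep_bdry_root: "finite (indep_bdry_root k \<Delta> n \<eta> b)"
  unfolding indep_bdry_root_def by (rule finite_subset[OF _ finite_indep_bdry]) auto

lemma indep_bdry_root_subset: "indep_bdry_root k \<Delta> n \<eta> b \<subseteq> indep_bdry k \<Delta> n \<eta>"
  by (auto simp: indep_bdry_root_def)

lemma card_indep_bdry_pos:
  assumes "k \<ge> 2" and "\<eta> \<subseteq> level k \<Delta> n"
  shows "card (indep_bdry k \<Delta> n \<eta>) > 0"
proof -
  have "\<eta> \<in> indep_bdry k \<Delta> n \<eta>"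
    using subset_level_in_indep_sets[OF assms] assms(2) by (auto simp: indep_bdry_def)
  then show ?thesis using finite_indep_bdry card_gt_0_iff by blast
qed

definition graft ::
    "nat \<Rightarrow> nat \<Rightarrow> bool \<Rightarrow> (nat \<Rightarrow> nat \<Rightarrow> (nat \<times> nat) list set) \<Rightarrow> (nat \<times> nat) list set" where
  "graft k \<Delta> b g = (if b then {[]} else {}) \<union> {(i, j) # w | i j w. i < \<Delta> - 1 \<and> j < k - 1 \<and> w \<in> g i j}"

definition subtrees :: "nat \<Rightarrow> nat \<Rightarrow> (nat \<times> nat) list set \<Rightarrow> nat \<Rightarrow> nat \<Rightarrow> (nat \<times> nat) list set" where
  "subtrees k \<Delta> S = (\<lambda>i\<in>{..<\<Delta> - 1}. \<lambda>j\<in>{..<k - 1}. subtree (i, j) S)"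

text \<open>An occupied root forces an unoccupied child in each of its hyperedges.\<close>
definition subtree_families ::
    "nat \<Rightarrow> nat \<Rightarrow> nat \<Rightarrow> (nat \<times> nat) list set \<Rightarrow> bool \<Rightarrow> (nat \<Rightarrow> nat \<Rightarrow> (nat \<times> nat) list set) set" where
  "subtree_families k \<Delta> n \<eta> b =
     {g \<in> (\<Pi>\<^sub>E i\<in>{..<\<Delta> - 1}. \<Pi>\<^sub>E j\<in>{..<k - 1}. indep_bdry k \<Delta> n (subtree (i, j) \<eta>)).
        b \<longrightarrow> (\<forall>i<\<Delta> - 1. \<exists>j<k - 1. [] \<notin> g i j)}"

lemma Cons_in_graft: "(i, j) # w \<in> graft k \<Delta> b g \<longleftrightarrow> i < \<Delta> - 1 \<and> j < k - 1 \<and> w \<in> g i j"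
  by (auto simp: graft_def)

lemma subtree_graft: "subtree (i, j) (graft k \<Delta> b g) = (if i < \<Delta> - 1 \<and> j < k - 1 then g i j else {})"
  by (auto simp: subtree_def graft_def)

lemma Nil_in_graft: "[] \<in> graft k \<Delta> b g \<longleftrightarrow> b"
  by (auto simp: graft_def)

lemma subtrees_in_subtree_families:
  assumes "k \<ge> 2" and \<eta>: "\<eta> \<subseteq> level k \<Delta> (Suc n)" and S: "S \<in> indep_bdry_root k \<Delta> (Suc n) \<eta> b"
  shows "subtrees k \<Delta> S \<in> subtree_families k \<Delta> n \<eta> b"
proof -
  have indep: "S \<subseteq> trunc_verts k \<Delta> (Suc n)" "\<And>c. subtree c S \<in> indep_sets k \<Delta> n"
    "[] \<in> S \<Longrightarrow> \<forall>i<\<Delta> - 1. \<exists>j<k - 1. [(i, j)] \<notin> S"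
    using S by (auto simp: indep_bdry_root_def indep_bdry_def indep_sets_Suc_iff)
  have "S \<inter> level k \<Delta> (Suc n) = \<eta>"
    using S by (simp add: indep_bdry_root_def indep_bdry_def)
  then have "subtree c S \<inter> level k \<Delta> n = subtree c \<eta>" for c
    using boundary_Suc_iff[OF indep(1) \<eta>] by blast
  with indep(2) have "subtrees k \<Delta> S \<in> (\<Pi>\<^sub>E i\<in>{..<\<Delta> - 1}. \<Pi>\<^sub>E j\<in>{..<k - 1}. indep_bdry k \<Delta> n (subtree (i, j) \<eta>))"
    by (auto simp: subtrees_def indep_bdry_def)
  moreover have "\<forall>i<\<Delta> - 1. \<exists>j<k - 1. [] \<notin> subtrees k \<Delta> S i j" if b
    using S indep(3) that by (fastforce simp: indep_bdry_root_def subtrees_def subtree_def)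
  ultimately show ?thesis by (simp add: subtree_families_def)
qed

lemma graft_in_indep_bdry_root:
  assumes k: "k \<ge> 2" and \<eta>: "\<eta> \<subseteq> level k \<Delta> (Suc n)" and g: "g \<in> subtree_families k \<Delta> n \<eta> b"
  shows "graft k \<Delta> b g \<in> indep_bdry_root k \<Delta> (Suc n) \<eta> b"
proof -
  let ?S = "graft k \<Delta> b g"
  have gij: "g i j \<in> indep_bdry k \<Delta> n (subtree (i, j) \<eta>)" if "i < \<Delta> - 1" "j < k - 1" for i j
    using g that by (auto simp: subtree_families_def)
  have "g i j \<subseteq> trunc_verts k \<Delta> n" if "i < \<Delta> - 1" "j < k - 1" for i j
    using gij[OF that] by (auto simp: indep_bdry_def indep_sets_def)
  then have verts: "?S \<subseteq> trunc_verts k \<Delta> (Suc n)"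
    by (auto simp: graft_def subset_iff)
  have "subtree c ?S \<in> indep_sets k \<Delta> n" for c
    using gij subset_level_in_indep_sets[OF k, of "{}"]
    by (cases c) (auto simp: subtree_graft indep_bdry_def)
  moreover have "\<forall>i<\<Delta> - 1. \<exists>j<k - 1. [(i, j)] \<notin> ?S" if "[] \<in> ?S"
    using g that by (auto simp: Nil_in_graft subtree_families_def graft_def)
  moreover have "subtree (i, j) ?S \<inter> level k \<Delta> n = subtree (i, j) \<eta>" for i j
  proof (cases "i < \<Delta> - 1 \<and> j < k - 1")
    case True
    then show ?thesis using gij[of i j] by (simp add: subtree_graft indep_bdry_def)
  next
    case False
    then have "subtree (i, j) \<eta> = {}" using \<eta> by (auto simp: subtree_def)
    then show ?thesis using False by (auto simp: subtree_graft)
  qed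
  ultimately show ?thesis
    using verts boundary_Suc_iff[OF verts \<eta>]
    by (auto simp: indep_bdry_root_def indep_bdry_def indep_sets_Suc_iff Nil_in_graft)
qed

lemma graft_subtrees:
  assumes "S \<subseteq> trunc_verts k \<Delta> (Suc n)"
  shows "graft k \<Delta> ([] \<in> S) (subtrees k \<Delta> S) = S"
proof (rule set_eqI)
  fix v
  have "(i, j) # w \<in> S \<Longrightarrow> i < \<Delta> - 1 \<and> j < k - 1" for i j w
    using assms by auto
  then show "v \<in> graft k \<Delta> ([] \<in> S) (subtrees k \<Delta> S) \<longleftrightarrow> v \<in> S"
    by (cases v) (auto simp: Nil_in_graft Cons_in_graft subtrees_def subtree_def)
qed

lemma subtrees_graft:
  assumes "g \<in> subtree_families k \<Delta> n \<eta> b"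
  shows "subtrees k \<Delta> (graft k \<Delta> b g) = g"
  using assms by (auto simp: subtrees_def subtree_graft subtree_families_def fun_eq_iff PiE_def extensional_def)

lemma bij_betw_subtrees:
  assumes "k \<ge> 2" and "\<eta> \<subseteq> level k \<Delta> (Suc n)"
  shows "bij_betw (subtrees k \<Delta>) (indep_bdry_root k \<Delta> (Suc n) \<eta> b) (subtree_families k \<Delta> n \<eta> b)"
proof (rule bij_betwI[where g = "graft k \<Delta> b"])
  show "graft k \<Delta> b (subtrees k \<Delta> S) = S" if "S \<in> indep_bdry_root k \<Delta> (Suc n) \<eta> b" for S
    using graft_subtrees[of S] that
    by (auto simp: indep_bdry_root_def indep_bdry_def indep_sets_def)
qed (use assms subtrees_in_subtree_families graft_in_indep_bdry_root subtrees_graft in auto)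

lemma subtree_families_False:
  "subtree_families k \<Delta> n \<eta> False =
     (\<Pi>\<^sub>E i\<in>{..<\<Delta> - 1}. \<Pi>\<^sub>E j\<in>{..<k - 1}. indep_bdry k \<Delta> n (subtree (i, j) \<eta>))"
  by (simp add: subtree_families_def)

lemma subtree_families_True:
  "subtree_families k \<Delta> n \<eta> True =
     (\<Pi>\<^sub>E i\<in>{..<\<Delta> - 1}. (\<Pi>\<^sub>E j\<in>{..<k - 1}. indep_bdry k \<Delta> n (subtree (i, j) \<eta>)) -
                            (\<Pi>\<^sub>E j\<in>{..<k - 1}. indep_bdry_root k \<Delta> n (subtree (i, j) \<eta>) True))"
proof (rule set_eqI)
  fix g
  have "g i \<in> (\<Pi>\<^sub>E j\<in>{..<k - 1}. indep_bdry k \<Delta> n (subtree (i, j) \<eta>)) \<Longrightarrow>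
      g i \<in> (\<Pi>\<^sub>E j\<in>{..<k - 1}. indep_bdry_root k \<Delta> n (subtree (i, j) \<eta>) True) \<longleftrightarrow>
      (\<forall>j<k - 1. [] \<in> g i j)" for i
    by (auto simp: PiE_iff indep_bdry_root_def)
  then show "g \<in> subtree_families k \<Delta> n \<eta> True \<longleftrightarrow> g \<in> (\<Pi>\<^sub>E i\<in>{..<\<Delta> - 1}.
      (\<Pi>\<^sub>E j\<in>{..<k - 1}. indep_bdry k \<Delta> n (subtree (i, j) \<eta>)) -
      (\<Pi>\<^sub>E j\<in>{..<k - 1}. indep_bdry_root k \<Delta> n (subtree (i, j) \<eta>) True))"
    unfolding subtree_families_def mem_Collect_eq PiE_iff[of g] Diff_iff by fastforce
qed

lemma card_indep_bdry_root_False: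
  assumes "k \<ge> 2" and "\<eta> \<subseteq> level k \<Delta> (Suc n)"
  shows "card (indep_bdry_root k \<Delta> (Suc n) \<eta> False) =
    (\<Prod>i<\<Delta> - 1. \<Prod>j<k - 1. card (indep_bdry k \<Delta> n (subtree (i, j) \<eta>)))"
  using bij_betw_same_card[OF bij_betw_subtrees[OF assms]]
  by (simp add: subtree_families_False card_PiE)

lemma card_indep_bdry_root_True:
  assumes "k \<ge> 2" and "\<eta> \<subseteq> level k \<Delta> (Suc n)"
  shows "card (indep_bdry_root k \<Delta> (Suc n) \<eta> True) =
    (\<Prod>i<\<Delta> - 1. (\<Prod>j<k - 1. card (indep_bdry k \<Delta> n (subtree (i, j) \<eta>))) -
                 (\<Prod>j<k - 1. card (indep_bdry_root k \<Delta> n (subtree (i, j) \<eta>) True)))"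
proof -
  have "card ((\<Pi>\<^sub>E j\<in>{..<k - 1}. indep_bdry k \<Delta> n (subtree (i, j) \<eta>)) -
              (\<Pi>\<^sub>E j\<in>{..<k - 1}. indep_bdry_root k \<Delta> n (subtree (i, j) \<eta>) True)) =
        (\<Prod>j<k - 1. card (indep_bdry k \<Delta> n (subtree (i, j) \<eta>))) -
        (\<Prod>j<k - 1. card (indep_bdry_root k \<Delta> n (subtree (i, j) \<eta>) True))" for i
    by (subst card_Diff_subset)
       (auto simp: card_PiE finite_indep_bdry_root intro!: finite_PiE PiE_mono indep_bdry_root_subset)
  then show ?thesis
    using bij_betw_same_card[OF bij_betw_subtrees[OF assms]]
    by (simp add: subtree_families_True card_PiE)
qed

lemma card_indep_bdry_eq:
  "card (indep_bdry k \<Delta> n \<eta>) = card (indep_bdry_root k \<Delta> n \<eta> False) + card (indep_bdry_root k \<Delta> n \<eta> True)"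
proof -
  have "indep_bdry k \<Delta> n \<eta> = indep_bdry_root k \<Delta> n \<eta> False \<union> indep_bdry_root k \<Delta> n \<eta> True"
    by (auto simp: indep_bdry_root_def)
  moreover have "indep_bdry_root k \<Delta> n \<eta> False \<inter> indep_bdry_root k \<Delta> n \<eta> True = {}"
    by (auto simp: indep_bdry_root_def)
  ultimately show ?thesis
    by (simp add: card_Un_disjoint finite_indep_bdry_root)
qed

text \<open>The tree recursion for the root occupation probability, with \<open>m = k - 1\<close> children on each
  of the \<open>d = \<Delta> - 1\<close> descending hyperedges of the root; \<open>p i j\<close> is the occupation probability
  of the \<open>j\<close>-th child on the \<open>i\<close>-th hyperedge in its own subtree.\<close>
definition bp_step :: "nat \<Rightarrow> nat \<Rightarrow> (nat \<Rightarrow> nat \<Rightarrow> real) \<Rightarrow> real" where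
  "bp_step m d p = (\<Prod>i<d. 1 - (\<Prod>j<m. p i j)) / (1 + (\<Prod>i<d. 1 - (\<Prod>j<m. p i j)))"

lemma root_prob_Suc:
  assumes k: "k \<ge> 2" and \<eta>: "\<eta> \<subseteq> level k \<Delta> (Suc n)"
  shows "root_prob k \<Delta> (Suc n) \<eta> = bp_step (k - 1) (\<Delta> - 1) (\<lambda>i j. root_prob k \<Delta> n (subtree (i, j) \<eta>))"
proof -
  define T where "T i j = real (card (indep_bdry k \<Delta> n (subtree (i, j) \<eta>)))" for i j
  define M where "M i j = real (card (indep_bdry_root k \<Delta> n (subtree (i, j) \<eta>) True))" for i j
  define P where "P = (\<Prod>i<\<Delta> - 1. \<Prod>j<k - 1. T i j)"
  define R where "R = (\<Prod>i<\<Delta> - 1. 1 - (\<Prod>j<k - 1. M i j / T i j))"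
  have T_pos: "T i j > 0" for i j
    unfolding T_def using card_indep_bdry_pos[OF k subtree_subset_level[OF \<eta>]] by simp
  have P_pos: "P > 0"
    unfolding P_def using T_pos by (auto intro!: prod_pos)
  have "real (card (indep_bdry_root k \<Delta> (Suc n) \<eta> False)) = P"
    by (simp add: card_indep_bdry_root_False[OF k \<eta>] P_def T_def)
  moreover have "real (card (indep_bdry_root k \<Delta> (Suc n) \<eta> True)) = P * R"
  proof -
    have "(\<Prod>j<k - 1. card (indep_bdry_root k \<Delta> n (subtree (i, j) \<eta>) True)) \<le>
        (\<Prod>j<k - 1. card (indep_bdry k \<Delta> n (subtree (i, j) \<eta>)))" for i
      by (intro prod_mono) (simp add: card_mono finite_indep_bdry indep_bdry_root_subset)
    then have "real (card (indep_bdry_root k \<Delta> (Suc n) \<eta> True)) =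
        (\<Prod>i<\<Delta> - 1. (\<Prod>j<k - 1. T i j) - (\<Prod>j<k - 1. M i j))"
      by (simp add: card_indep_bdry_root_True[OF k \<eta>] T_def M_def of_nat_diff)
    also have "\<dots> = (\<Prod>i<\<Delta> - 1. (\<Prod>j<k - 1. T i j) * (1 - (\<Prod>j<k - 1. M i j / T i j)))"
      using T_pos by (intro prod.cong refl prod_diff_eq_prod_mult) (simp add: less_imp_neq[symmetric])
    finally show ?thesis
      by (simp add: P_def R_def prod.distrib)
  qed
  ultimately have "root_prob k \<Delta> (Suc n) \<eta> = (P * R) / (P * (1 + R))"
    unfolding root_prob_eq_card card_indep_bdry_eq by (simp add: distrib_left)
  also have "\<dots> = R / (1 + R)"
    using P_pos by simp
  finally show ?thesis
    by (simp add: bp_step_def R_def M_def T_def root_prob_eq_card)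
qed

section \<open>Extremal boundary conditions\<close>

definition bp_map :: "nat \<Rightarrow> nat \<Rightarrow> real \<Rightarrow> real" where
  "bp_map m d x = (1 - x ^ m) ^ d / (1 + (1 - x ^ m) ^ d)"

lemma bp_step_const: "bp_step m d (\<lambda>i j. x) = bp_map m d x"
  by (simp add: bp_step_def bp_map_def)

lemma one_minus_power_bounds:
  "0 \<le> (x::real) \<Longrightarrow> x \<le> 1 \<Longrightarrow> 0 \<le> (1 - x ^ m) ^ d \<and> (1 - x ^ m) ^ d \<le> 1"
  by (simp add: power_le_one)

lemma bp_map_bounds: "0 \<le> x \<Longrightarrow> x \<le> 1 \<Longrightarrow> 0 \<le> bp_map m d x \<and> bp_map m d x \<le> 1 / 2"
  using one_minus_power_bounds[of x m d] by (auto simp: bp_map_def field_simps)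

lemma bp_map_antimono: "0 \<le> x \<Longrightarrow> x \<le> y \<Longrightarrow> y \<le> 1 \<Longrightarrow> bp_map m d y \<le> bp_map m d x"
  unfolding bp_map_def
  by (intro frac_one_plus_mono power_mono) (auto simp: power_mono power_le_one)

lemma bp_map_0: "m \<ge> 1 \<Longrightarrow> bp_map m d 0 = 1 / 2"
  by (simp add: bp_map_def power_0_left)

lemma bp_map_1: "d \<ge> 1 \<Longrightarrow> bp_map m d 1 = 0"
  by (simp add: bp_map_def)

lemma bp_step_cong:
  assumes "\<And>i j. i < d \<Longrightarrow> j < m \<Longrightarrow> p i j = q i j"
  shows "bp_step m d p = bp_step m d q"
proof -
  have "(\<Prod>j<m. p i j) = (\<Prod>j<m. q i j)" if "i < d" for i
    using assms that by (intro prod.cong) auto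
  then have "(\<Prod>i<d. 1 - (\<Prod>j<m. p i j)) = (\<Prod>i<d. 1 - (\<Prod>j<m. q i j))"
    by (intro prod.cong) auto
  then show ?thesis by (simp add: bp_step_def)
qed

lemma bp_step_antimono:
  assumes "\<And>i j. i < d \<Longrightarrow> j < m \<Longrightarrow> 0 \<le> p i j \<and> p i j \<le> q i j \<and> q i j \<le> 1"
  shows "bp_step m d q \<le> bp_step m d p"
proof -
  have q_le_1: "(\<Prod>j<m. q i j) \<le> 1" if "i < d" for i
    using assms that by (intro prod_le_1) (meson order_trans lessThan_iff)
  have "(\<Prod>i<d. 1 - (\<Prod>j<m. q i j)) \<le> (\<Prod>i<d. 1 - (\<Prod>j<m. p i j))"
    using assms q_le_1 by (intro prod_mono) (auto intro!: prod_mono)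
  moreover have "0 \<le> (\<Prod>i<d. 1 - (\<Prod>j<m. q i j))"
    using q_le_1 by (intro prod_nonneg) auto
  ultimately show ?thesis
    unfolding bp_step_def by (rule frac_one_plus_mono[rotated])
qed

lemma bp_map_iter_bounds: "0 \<le> x \<Longrightarrow> x \<le> 1 \<Longrightarrow> 0 \<le> (bp_map m d ^^ n) x \<and> (bp_map m d ^^ n) x \<le> 1"
  by (induction n) (auto dest: bp_map_bounds[of _ m d])

lemma root_prob_bounds: "0 \<le> root_prob k \<Delta> n \<eta> \<and> root_prob k \<Delta> n \<eta> \<le> 1"
  using card_mono[OF finite_indep_bdry indep_bdry_root_subset, of k \<Delta> n \<eta> True]
  by (cases "card (indep_bdry k \<Delta> n \<eta>) = 0") (simp_all add: root_prob_eq_card divide_le_eq_1)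

lemma root_prob_0:
  assumes "k \<ge> 2" and "\<eta> \<subseteq> level k \<Delta> 0"
  shows "root_prob k \<Delta> 0 \<eta> = (if [] \<in> \<eta> then 1 else 0)"
proof -
  have "indep_bdry k \<Delta> 0 \<eta> = {\<eta>}"
    using assms(2) unfolding indep_bdry_def indep_sets_0[OF assms(1)] level_0 by auto
  moreover have "indep_bdry_root k \<Delta> 0 \<eta> True = (if [] \<in> \<eta> then {\<eta>} else {})"
    using assms(2) unfolding indep_bdry_root_def indep_bdry_def indep_sets_0[OF assms(1)] level_0 by auto
  ultimately show ?thesis
    by (simp add: root_prob_eq_card)
qed

text \<open>By antimonotonicity of the recursion, the all-unoccupied and all-occupied boundaries are extremal.\<close>
lemma root_prob_between_extremes:
  assumes k: "k \<ge> 2" and "\<eta> \<subseteq> level k \<Delta> n"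
  shows "min ((bp_map (k - 1) (\<Delta> - 1) ^^ n) 0) ((bp_map (k - 1) (\<Delta> - 1) ^^ n) 1) \<le> root_prob k \<Delta> n \<eta> \<and>
    root_prob k \<Delta> n \<eta> \<le> max ((bp_map (k - 1) (\<Delta> - 1) ^^ n) 0) ((bp_map (k - 1) (\<Delta> - 1) ^^ n) 1)"
  using assms(2)
proof (induction n arbitrary: \<eta>)
  case 0
  then show ?case using root_prob_0[OF k] by simp
next
  case (Suc n)
  let ?F = "bp_map (k - 1) (\<Delta> - 1)"
  define a where "a = (?F ^^ n) 0"
  define b where "b = (?F ^^ n) 1"
  have ab: "0 \<le> a" "a \<le> 1" "0 \<le> b" "b \<le> 1"
    unfolding a_def b_def using bp_map_iter_bounds by auto
  let ?p = "\<lambda>i j. root_prob k \<Delta> n (subtree (i, j) \<eta>)"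
  have p: "min a b \<le> ?p i j \<and> ?p i j \<le> max a b" for i j
    using Suc.IH[OF subtree_subset_level[OF Suc.prems]] unfolding a_def b_def by blast
  have "bp_step (k - 1) (\<Delta> - 1) ?p \<le> ?F (min a b)"
    unfolding bp_step_const[symmetric] by (rule bp_step_antimono) (use p ab root_prob_bounds in auto)
  moreover have "?F (max a b) \<le> bp_step (k - 1) (\<Delta> - 1) ?p"
    unfolding bp_step_const[symmetric] by (rule bp_step_antimono) (use p ab root_prob_bounds in auto)
  moreover have "?F (min a b) = max (?F a) (?F b)" "?F (max a b) = min (?F a) (?F b)"
    using ab bp_map_antimono[of a b "k - 1" "\<Delta> - 1"] bp_map_antimono[of b a "k - 1" "\<Delta> - 1"]
    by (auto simp: min_def max_def)
  moreover have "(?F ^^ Suc n) 0 = ?F a" "(?F ^^ Suc n) 1 = ?F b"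
    by (simp_all add: a_def b_def)
  ultimately show ?case
    by (simp only: root_prob_Suc[OF k Suc.prems])
qed

lemma root_prob_empty:
  assumes "k \<ge> 2"
  shows "root_prob k \<Delta> n {} = (bp_map (k - 1) (\<Delta> - 1) ^^ n) 0"
proof (induction n)
  case 0
  then show ?case using root_prob_0[OF assms] by simp
next
  case (Suc n)
  have "subtree c {} = {}" for c
    by (simp add: subtree_def)
  then show ?case
    using Suc root_prob_Suc[OF assms, of "{}"] by (simp add: bp_step_const)
qed

lemma root_prob_level: "k \<ge> 2 \<Longrightarrow> root_prob k \<Delta> n (level k \<Delta> n) = (bp_map (k - 1) (\<Delta> - 1) ^^ n) 1"
proof (induction n)
  case 0
  then show ?case by (simp add: root_prob_0 level_0)
next
  case (Suc n)
  have "bp_step (k - 1) (\<Delta> - 1) (\<lambda>i j. root_prob k \<Delta> n (subtree (i, j) (level k \<Delta> (Suc n)))) =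
      bp_step (k - 1) (\<Delta> - 1) (\<lambda>i j. root_prob k \<Delta> n (level k \<Delta> n))"
    by (rule bp_step_cong) (simp add: subtree_level_Suc)
  then show ?case
    using Suc by (simp add: root_prob_Suc bp_step_const)
qed

lemma max_influence_eq:
  assumes k: "k \<ge> 2"
  shows "max_influence k \<Delta> n = \<bar>(bp_map (k - 1) (\<Delta> - 1) ^^ n) 0 - (bp_map (k - 1) (\<Delta> - 1) ^^ n) 1\<bar>"
proof -
  let ?infl = "\<lambda>(\<eta>, \<eta>'). \<bar>root_prob k \<Delta> n \<eta> - root_prob k \<Delta> n \<eta>'\<bar>"
  have "max_influence k \<Delta> n = Max (?infl ` (Pow (level k \<Delta> n) \<times> Pow (level k \<Delta> n)))"
    unfolding max_influence_def by (rule arg_cong[where f = Max]) auto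
  also have "\<dots> = ?infl ({}, level k \<Delta> n)"
  proof (rule Max_eqI)
    fix x assume "x \<in> ?infl ` (Pow (level k \<Delta> n) \<times> Pow (level k \<Delta> n))"
    then obtain \<eta> \<eta>' where \<eta>: "\<eta> \<subseteq> level k \<Delta> n" and \<eta>': "\<eta>' \<subseteq> level k \<Delta> n"
      and x: "x = ?infl (\<eta>, \<eta>')"
      by auto
    have "?infl (\<eta>, \<eta>') \<le> \<bar>(bp_map (k - 1) (\<Delta> - 1) ^^ n) 0 - (bp_map (k - 1) (\<Delta> - 1) ^^ n) 1\<bar>"
      unfolding case_prod_conv
      by (rule abs_diff_le_between[OF root_prob_between_extremes[OF k \<eta>] root_prob_between_extremes[OF k \<eta>']])
    then show "x \<le> ?infl ({}, level k \<Delta> n)"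
      by (simp add: x root_prob_empty[OF k] root_prob_level[OF k])
  qed (auto simp: finite_level)
  finally show ?thesis
    by (simp add: root_prob_empty[OF k] root_prob_level[OF k])
qed

section \<open>Uniqueness and two-cycles of the scalar map\<close>

definition bp_orbit :: "nat \<Rightarrow> nat \<Rightarrow> nat \<Rightarrow> real" where
  "bp_orbit m d n = (bp_map m d ^^ n) 0"

text \<open>The even iterates of \<open>bp_map\<close> from \<open>0\<close> stay below \<open>x\<close> and the odd ones above \<open>y\<close>.\<close>
definition bp_two_cycle :: "nat \<Rightarrow> nat \<Rightarrow> bool" where
  "bp_two_cycle m d \<longleftrightarrow> (\<exists>x y. 0 \<le> x \<and> x < y \<and> y \<le> 1 \<and> y \<le> bp_map m d x \<and> bp_map m d y \<le> x)"

lemma bp_orbit_bounds: "0 \<le> bp_orbit m d n" "bp_orbit m d n \<le> 1"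
  by (simp_all add: bp_orbit_def bp_map_iter_bounds)

lemma bp_orbit_0: "bp_orbit m d 0 = 0"
  by (simp add: bp_orbit_def)

lemma bp_orbit_1: "m \<ge> 1 \<Longrightarrow> bp_orbit m d 1 = 1 / 2"
  by (simp add: bp_orbit_def bp_map_0)

lemma bp_orbit_Suc: "bp_orbit m d (Suc n) = bp_map m d (bp_orbit m d n)"
  by (simp add: bp_orbit_def)

lemma bp_map_iter_1: "d \<ge> 1 \<Longrightarrow> (bp_map m d ^^ Suc n) 1 = bp_orbit m d n"
  by (simp add: bp_orbit_def funpow_Suc_right bp_map_1 del: funpow.simps)

lemma bp_orbit_Suc_antimono:
  "bp_orbit m d i \<le> bp_orbit m d j \<Longrightarrow> bp_orbit m d (Suc j) \<le> bp_orbit m d (Suc i)"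
  unfolding bp_orbit_Suc by (rule bp_map_antimono[OF bp_orbit_bounds(1) _ bp_orbit_bounds(2)])

lemma bp_orbit_add2_mono:
  "bp_orbit m d i \<le> bp_orbit m d j \<Longrightarrow> bp_orbit m d (i + 2) \<le> bp_orbit m d (j + 2)"
  using bp_orbit_Suc_antimono[OF bp_orbit_Suc_antimono] by (simp add: numeral_2_eq_2)

lemma bp_orbit_even_mono: "bp_orbit m d (2 * n) \<le> bp_orbit m d (2 * n + 2)"
proof (induction n)
  case 0
  then show ?case using bp_orbit_bounds(1)[of m d 2] by (simp add: bp_orbit_0 numeral_2_eq_2)
next
  case (Suc n)
  then show ?case using bp_orbit_add2_mono[OF Suc] by (simp add: algebra_simps)
qed

lemma bp_orbit_odd_antimono:
  assumes "m \<ge> 1"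
  shows "bp_orbit m d (2 * n + 3) \<le> bp_orbit m d (2 * n + 1)"
proof (induction n)
  case 0
  have "bp_orbit m d 3 = bp_map m d (bp_orbit m d 2)"
    using bp_orbit_Suc[of m d 2] by (simp add: numeral_3_eq_3)
  also have "\<dots> \<le> 1 / 2"
    using bp_map_bounds[of "bp_orbit m d 2" m d] bp_orbit_bounds[of m d 2] by simp
  finally show ?case using bp_orbit_1[OF assms, of d] by simp
next
  case (Suc n)
  then show ?case using bp_orbit_add2_mono[OF Suc] by (simp add: algebra_simps)
qed

lemma bp_orbit_even_le_odd: "bp_orbit m d (2 * n) \<le> bp_orbit m d (2 * n + 1)"
proof (induction n)
  case 0
  then show ?case using bp_orbit_bounds(1)[of m d 1] by (simp add: bp_orbit_0)
next
  case (Suc n)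
  then have "bp_orbit m d (2 * n + 2) \<le> bp_orbit m d (2 * n + 1)"
    using bp_orbit_Suc_antimono by fastforce
  then show ?case
    using bp_orbit_Suc_antimono by fastforce
qed

lemma bp_orbit_trapped:
  assumes "0 \<le> x" "x < y" "y \<le> 1" "y \<le> bp_map m d x" "bp_map m d y \<le> x"
  shows "bp_orbit m d (2 * n) \<le> x \<and> y \<le> bp_orbit m d (2 * n + 1)"
proof (induction n)
  case 0
  have "bp_map m d x \<le> bp_orbit m d 1"
    using assms bp_map_antimono[of 0 x] by (simp add: bp_orbit_def)
  then show ?case using assms by (simp add: bp_orbit_0)
next
  case (Suc n)
  have "bp_orbit m d (2 * Suc n) = bp_map m d (bp_orbit m d (2 * n + 1))"
    by (simp add: bp_orbit_Suc)
  also have "\<dots> \<le> bp_map m d y"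
    using Suc assms by (intro bp_map_antimono bp_orbit_bounds) auto
  also have "\<dots> \<le> x"
    by (fact assms)
  finally have even: "bp_orbit m d (2 * Suc n) \<le> x" .
  have "y \<le> bp_map m d x"
    by (fact assms)
  also have "\<dots> \<le> bp_map m d (bp_orbit m d (2 * Suc n))"
    using even assms by (intro bp_map_antimono bp_orbit_bounds) auto
  also have "\<dots> = bp_orbit m d (2 * Suc n + 1)"
    using bp_orbit_Suc[of m d "2 * Suc n"] by simp
  finally show ?case using even by simp
qed

lemma isCont_bp_map: "0 \<le> x \<Longrightarrow> x \<le> 1 \<Longrightarrow> isCont (bp_map m d) x"
  unfolding bp_map_def
  by (intro continuous_intros) (use one_minus_power_bounds[of x m d] in auto)

lemma bp_orbit_even_odd_limits:
  assumes "m \<ge> 1"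
  obtains L0 L1 where "(\<lambda>n. bp_orbit m d (2 * n)) \<longlonglongrightarrow> L0" "(\<lambda>n. bp_orbit m d (2 * n + 1)) \<longlonglongrightarrow> L1"
    "0 \<le> L0" "L0 \<le> L1" "L1 \<le> 1" "L1 = bp_map m d L0" "L0 = bp_map m d L1"
proof -
  define ev where "ev n = bp_orbit m d (2 * n)" for n
  define od where "od n = bp_orbit m d (2 * n + 1)" for n
  have "incseq ev"
    using bp_orbit_even_mono[of m d] by (intro incseq_SucI) (simp add: ev_def)
  moreover have "bdd_above (range ev)"
    using bp_orbit_bounds(2) by (auto simp: ev_def intro: bdd_aboveI[of _ 1])
  ultimately obtain L0 where L0: "ev \<longlonglongrightarrow> L0"
    using LIMSEQ_incseq_SUP by blast
  have "decseq od"
    using bp_orbit_odd_antimono[OF assms, of d] by (intro decseq_SucI) (simp add: od_def numeral_3_eq_3)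
  moreover have "bdd_below (range od)"
    using bp_orbit_bounds(1) by (auto simp: od_def intro: bdd_belowI[of _ 0])
  ultimately obtain L1 where L1: "od \<longlonglongrightarrow> L1"
    using LIMSEQ_decseq_INF by blast
  have L0_bounds: "0 \<le> L0" "L0 \<le> 1"
    using LIMSEQ_le_const[OF L0] LIMSEQ_le_const2[OF L0] bp_orbit_bounds by (auto simp: ev_def)
  have L1_bounds: "0 \<le> L1" "L1 \<le> 1"
    using LIMSEQ_le_const[OF L1] LIMSEQ_le_const2[OF L1] bp_orbit_bounds by (auto simp: od_def)
  have "(\<lambda>n. bp_map m d (ev n)) = od" "(\<lambda>n. bp_map m d (od n)) = (\<lambda>n. ev (Suc n))"
    by (simp_all add: fun_eq_iff ev_def od_def bp_orbit_Suc)
  then have "L1 = bp_map m d L0" "L0 = bp_map m d L1"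
    using isCont_tendsto_compose[OF isCont_bp_map[OF L0_bounds] L0]
      isCont_tendsto_compose[OF isCont_bp_map[OF L1_bounds] L1] L1 LIMSEQ_Suc[OF L0]
    by (metis LIMSEQ_unique)+
  moreover have "L0 \<le> L1"
    using LIMSEQ_le[OF L0 L1] bp_orbit_even_le_odd by (auto simp: ev_def od_def)
  ultimately show thesis
    using that L0 L1 L0_bounds L1_bounds unfolding ev_def od_def by blast
qed

lemma bp_orbit_convergent_if_no_two_cycle:
  assumes "m \<ge> 1" and "\<not> bp_two_cycle m d"
  shows "convergent (bp_orbit m d)"
proof -
  obtain L0 L1 where lim: "(\<lambda>n. bp_orbit m d (2 * n)) \<longlonglongrightarrow> L0" "(\<lambda>n. bp_orbit m d (2 * n + 1)) \<longlonglongrightarrow> L1"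
    and L: "0 \<le> L0" "L0 \<le> L1" "L1 \<le> 1" "L1 = bp_map m d L0" "L0 = bp_map m d L1"
    using bp_orbit_even_odd_limits[OF assms(1)] by blast
  have "L0 = L1"
    using assms(2) L unfolding bp_two_cycle_def by force
  then have "(\<lambda>n. bp_orbit m d (2 * n + 1)) \<longlonglongrightarrow> L0"
    using lim(2) by simp
  then have "bp_orbit m d \<longlonglongrightarrow> L0"
    by (rule LIMSEQ_even_odd[OF lim(1)])
  then show ?thesis
    by (rule convergentI)
qed

lemma bp_orbit_steps_bounded_below_if_two_cycle:
  assumes "bp_two_cycle m d"
  obtains g :: real where "g > 0" "\<And>n. g \<le> \<bar>bp_orbit m d (Suc n) - bp_orbit m d n\<bar>"
proof -
  obtain x y where xy: "0 \<le> x" "x < y" "y \<le> 1" "y \<le> bp_map m d x" "bp_map m d y \<le> x"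
    using assms unfolding bp_two_cycle_def by blast
  have "y - x \<le> \<bar>bp_orbit m d (Suc n) - bp_orbit m d n\<bar>" for n
  proof (cases "even n")
    case True
    then obtain j where "n = 2 * j" by blast
    then show ?thesis using bp_orbit_trapped[OF xy, of j] by (simp add: abs_if)
  next
    case False
    then obtain j where "n = 2 * j + 1" using oddE by blast
    then show ?thesis
      using bp_orbit_trapped[OF xy, of j] bp_orbit_trapped[OF xy, of "Suc j"] by (simp add: abs_if)
  qed
  then show thesis using that[of "y - x"] xy by simp
qed

lemma max_influence_Suc:
  assumes "k \<ge> 2" and "\<Delta> \<ge> 2"
  shows "max_influence k \<Delta> (Suc n) = \<bar>bp_orbit (k - 1) (\<Delta> - 1) (Suc n) - bp_orbit (k - 1) (\<Delta> - 1) n\<bar>"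
  using assms by (simp add: max_influence_eq bp_map_iter_1 bp_orbit_def[symmetric] del: funpow.simps)

lemma uniqueness_iff_no_two_cycle:
  assumes k: "k \<ge> 2" and \<Delta>: "\<Delta> \<ge> 2"
  shows "uniqueness k \<Delta> \<longleftrightarrow> \<not> bp_two_cycle (k - 1) (\<Delta> - 1)"
proof
  assume "uniqueness k \<Delta>"
  show "\<not> bp_two_cycle (k - 1) (\<Delta> - 1)"
  proof
    assume "bp_two_cycle (k - 1) (\<Delta> - 1)"
    then obtain g where "g > 0" and g: "\<And>n. g \<le> max_influence k \<Delta> (Suc n)"
      unfolding max_influence_Suc[OF k \<Delta>] by (rule bp_orbit_steps_bounded_below_if_two_cycle) blast
    have "ereal g \<le> ereal (max_influence k \<Delta> n)" if "n \<ge> 1" for n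
      using g[of "n - 1"] that by simp
    then have "\<forall>\<^sub>F n in sequentially. ereal g \<le> ereal (max_influence k \<Delta> n)"
      by (rule eventually_sequentiallyI)
    then have "ereal g \<le> limsup (\<lambda>n. ereal (max_influence k \<Delta> n))"
      by (intro le_Limsup) auto
    with \<open>g > 0\<close> \<open>uniqueness k \<Delta>\<close> show False
      by (simp add: uniqueness_def)
  qed
next
  assume "\<not> bp_two_cycle (k - 1) (\<Delta> - 1)"
  moreover have "k - 1 \<ge> 1" using k by simp
  ultimately obtain L where L: "bp_orbit (k - 1) (\<Delta> - 1) \<longlonglongrightarrow> L"
    using bp_orbit_convergent_if_no_two_cycle by (auto simp: convergent_def)
  have "(\<lambda>n. bp_orbit (k - 1) (\<Delta> - 1) (Suc n) - bp_orbit (k - 1) (\<Delta> - 1) n) \<longlonglongrightarrow> 0"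
    using tendsto_diff[OF LIMSEQ_Suc[OF L] L] by simp
  then have "(\<lambda>n. max_influence k \<Delta> (Suc n)) \<longlonglongrightarrow> 0"
    unfolding max_influence_Suc[OF k \<Delta>] by (rule tendsto_rabs_zero)
  then have "(\<lambda>n. ereal (max_influence k \<Delta> n)) \<longlonglongrightarrow> 0"
    by (simp add: LIMSEQ_imp_Suc zero_ereal_def)
  then show "uniqueness k \<Delta>"
    unfolding uniqueness_def by (intro lim_imp_Limsup) auto
qed

section \<open>Two-cycles for small and large degree\<close>

text \<open>For \<open>\<Delta> = 2\<close> the map is a contraction with constant \<open>4/9\<close> on \<open>[0, 1/2]\<close>.\<close>
lemma no_bp_two_cycle_1:
  assumes "m \<ge> 1"
  shows "\<not> bp_two_cycle m 1"
proof
  assume "bp_two_cycle m 1"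
  then obtain x y where xy: "0 \<le> x" "x < y" "y \<le> 1" "y \<le> bp_map m 1 x" "bp_map m 1 y \<le> x"
    unfolding bp_two_cycle_def by blast
  have "y \<le> 1 / 2"
    using xy bp_map_bounds[of x m 1] by linarith
  obtain n where n: "m = Suc n" using assms by (cases m) auto
  define u where "u = x ^ m"
  define v where "v = y ^ m"
  have "u \<le> v" "v \<le> 1 / 2"
    using xy \<open>y \<le> 1 / 2\<close> power_mono[of x y m] power_decreasing[of 1 m y] assms
    by (auto simp: u_def v_def)
  have "0 \<le> u" "v - u \<le> y - x"
    using xy \<open>y \<le> 1 / 2\<close> power_diff_le_diff[of x y n] by (simp_all add: u_def v_def n)
  have "bp_map m 1 x - bp_map m 1 y = (v - u) / ((2 - u) * (2 - v))"
    using \<open>v \<le> 1 / 2\<close> \<open>u \<le> v\<close> unfolding bp_map_def u_def[symmetric] v_def[symmetric]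
    by (simp add: field_simps)
  also have "\<dots> \<le> (v - u) / (9 / 4)"
  proof (rule divide_left_mono)
    show "9 / 4 \<le> (2 - u) * (2 - v)"
      using mult_mono[of "3 / 2" "2 - u" "3 / 2" "2 - v"] \<open>u \<le> v\<close> \<open>v \<le> 1 / 2\<close> by simp
  qed (use \<open>u \<le> v\<close> \<open>0 \<le> u\<close> \<open>v \<le> 1 / 2\<close> in auto)
  also have "\<dots> < y - x"
    using \<open>v - u \<le> y - x\<close> xy by simp
  finally show False
    using xy by simp
qed

lemma ex_bp_two_cycle:
  assumes "m \<ge> 1"
  shows "\<exists>d\<ge>2. bp_two_cycle m d"
proof -
  define c :: real where "c = 1 - (1 / 3) ^ m"
  have c: "0 \<le> c" "c < 1"
    unfolding c_def using assms by (auto simp: power_le_one)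
  have "(\<lambda>n. real n * c ^ n) \<longlonglongrightarrow> 0"
    by (rule powser_times_n_limit_0) (use c in simp)
  then obtain N where N: "\<forall>n\<ge>N. norm (real n * c ^ n - 0) < 1 / 2"
    using LIMSEQ_D[of _ 0 "1 / 2"] by force
  define d where "d = max N 2"
  have "d \<ge> 2" "real d * c ^ d < 1 / 2"
    using N[rule_format, of d] c by (auto simp: d_def)
  define x :: real where "x = 1 / (2 * real d)"
  have x: "0 < x" "x \<le> 1 / 4"
    unfolding x_def using \<open>d \<ge> 2\<close> by (auto simp: field_simps)
  have "1 / 3 \<le> bp_map m d x"
  proof -
    have "real d * x ^ m \<le> real d * x"
      using x assms power_decreasing[of 1 m x] by (intro mult_left_mono) auto
    also have "\<dots> = 1 / 2"
      unfolding x_def using \<open>d \<ge> 2\<close> by simp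
    finally have "1 - real d * x ^ m \<ge> 1 / 2" by simp
    moreover have "1 - real d * x ^ m \<le> (1 - x ^ m) ^ d"
      using Bernoulli_inequality[of "- (x ^ m)" d] x by (simp add: power_le_one)
    ultimately show ?thesis
      unfolding bp_map_def by (simp add: field_simps)
  qed
  moreover have "bp_map m d (1 / 3) \<le> x"
  proof -
    have "bp_map m d (1 / 3) \<le> (1 - (1 / 3) ^ m) ^ d"
      unfolding bp_map_def using one_minus_power_bounds[of "1 / 3" m d] by (intro frac_one_plus_le) simp
    also have "\<dots> = c ^ d"
      by (simp add: c_def)
    also have "\<dots> \<le> x"
      unfolding x_def using \<open>real d * c ^ d < 1 / 2\<close> \<open>d \<ge> 2\<close> by (simp add: field_simps)
    finally show ?thesis .
  qed
  ultimately have "bp_two_cycle m d"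
    unfolding bp_two_cycle_def using x by (intro exI[of _ x] exI[of _ "1 / 3"]) auto
  then show ?thesis
    using \<open>d \<ge> 2\<close> by blast
qed

section \<open>Two-cycles persist as the degree grows\<close>

definition neg_logit :: "real \<Rightarrow> real" where
  "neg_logit t = ln (1 - t) - ln t"

definition edge_weight :: "nat \<Rightarrow> real \<Rightarrow> real" where
  "edge_weight m t = - ln (1 - t ^ m)"

definition cycle_potential :: "nat \<Rightarrow> real \<Rightarrow> real" where
  "cycle_potential m t = neg_logit t * edge_weight m t"

definition cycle_potential_numer :: "nat \<Rightarrow> real \<Rightarrow> real" where
  "cycle_potential_numer m t = real m * (1 - t) * neg_logit t - (1 - t ^ m) * edge_weight m t / t ^ m"

lemma neg_logit_deriv:
  "0 < t \<Longrightarrow> t < 1 \<Longrightarrow> (neg_logit has_real_derivative - 1 / (t * (1 - t))) (at t)"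
  unfolding neg_logit_def by (rule derivative_eq_intros refl | simp)+ (simp add: field_simps)

lemma edge_weight_deriv:
  assumes "0 < t" "t < 1" "m \<ge> 1"
  shows "(edge_weight m has_real_derivative real m * t ^ m / (t * (1 - t ^ m))) (at t)"
proof -
  have "0 < 1 - t ^ m" using power_less_one_pos[OF assms] by simp
  have "((\<lambda>t. 1 - t ^ m) has_real_derivative - (real m * t ^ m / t)) (at t)"
    using DERIV_diff[OF DERIV_const DERIV_power_div] assms by simp
  then have "((\<lambda>t. ln (1 - t ^ m)) has_real_derivative inverse (1 - t ^ m) * - (real m * t ^ m / t)) (at t)"
    by (rule DERIV_chain2[where g = "\<lambda>t. 1 - t ^ m", OF DERIV_ln[OF \<open>0 < 1 - t ^ m\<close>]])
  then show ?thesis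
    unfolding edge_weight_def[abs_def] by (rule DERIV_minus[THEN DERIV_cong]) (simp add: field_simps)
qed

lemma cycle_potential_deriv:
  assumes "0 < t" "t < 1" "m \<ge> 1"
  shows "(cycle_potential m has_real_derivative
      t ^ m * cycle_potential_numer m t / (t * (1 - t) * (1 - t ^ m))) (at t)"
proof -
  have nz: "t \<noteq> 0" "1 - t \<noteq> 0" "t ^ m \<noteq> 0" "1 - t ^ m \<noteq> 0"
    using assms power_less_one_pos[OF assms] by auto
  \<comment> \<open>\<open>field_simps\<close> needs the factors \<open>1 - t\<close>, \<open>t ^ m\<close>, \<open>1 - t ^ m\<close> as atoms\<close>
  have "- 1 / (t * a) * B + real m * u / (t * w) * L = u * (real m * a * L - w * B / u) / (t * a * w)"
    if "a \<noteq> 0" "w \<noteq> 0" "u \<noteq> 0" for a w u L B :: real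
    using that nz(1) by (simp add: field_simps)
  from this[OF nz(2,4,3)]
  have "- 1 / (t * (1 - t)) * edge_weight m t + real m * t ^ m / (t * (1 - t ^ m)) * neg_logit t =
      t ^ m * cycle_potential_numer m t / (t * (1 - t) * (1 - t ^ m))"
    by (simp add: cycle_potential_numer_def)
  then show ?thesis
    unfolding cycle_potential_def[abs_def]
    by (rule DERIV_cong[OF DERIV_mult[OF neg_logit_deriv[OF assms(1,2)] edge_weight_deriv[OF assms]]])
qed

lemma cycle_potential_numer_deriv:
  assumes "0 < t" "t < 1" "m \<ge> 1"
  shows "(cycle_potential_numer m has_real_derivative
      - real m * neg_logit t - real m / t * (2 - edge_weight m t / t ^ m)) (at t)"
proof -
  have nz: "t \<noteq> 0" "1 - t \<noteq> 0" "t ^ m \<noteq> 0" "1 - t ^ m \<noteq> 0"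
    using assms power_less_one_pos[OF assms] by auto
  have lin: "((\<lambda>t. real m * (1 - t)) has_real_derivative - real m) (at t)"
    by (auto intro!: derivative_eq_intros)
  have vac: "((\<lambda>t. 1 - t ^ m) has_real_derivative - (real m * t ^ m / t)) (at t)"
    using DERIV_diff[OF DERIV_const DERIV_power_div[OF nz(1)]] by simp
  note D = DERIV_diff[OF DERIV_mult[OF lin neg_logit_deriv[OF assms(1,2)]]
      DERIV_divide[OF DERIV_mult[OF vac edge_weight_deriv[OF assms]] DERIV_power_div[OF nz(1)] nz(3)]]
  \<comment> \<open>\<open>field_simps\<close> needs the factors \<open>1 - t\<close>, \<open>t ^ m\<close>, \<open>1 - t ^ m\<close> as atoms\<close>
  have "- real m * L + - 1 / (t * a) * (real m * a)
      - ((- (real m * u / t) * B + real m * u / (t * (1 - u)) * (1 - u)) * u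
         - (1 - u) * B * (real m * u / t)) / (u * u)
      = - real m * L - real m / t * (2 - B / u)"
    if "a \<noteq> 0" "1 - u \<noteq> 0" "u \<noteq> 0" for a u L B :: real
    using that nz(1) by (simp add: field_simps)
  from this[OF nz(2,4,3)]
  show ?thesis
    unfolding cycle_potential_numer_def[abs_def] by (intro DERIV_cong[OF D]) simp
qed

lemma neg_logit_pos: "0 < t \<Longrightarrow> t < 1 / 2 \<Longrightarrow> neg_logit t > 0"
  unfolding neg_logit_def by (simp add: ln_less_cancel_iff)

lemma edge_weight_le:
  assumes "0 < t" "t < 1 / 2" "m \<ge> 1"
  shows "edge_weight m t \<le> 2 * t ^ m"
proof -
  have "t ^ m \<le> t" using assms power_decreasing[of 1 m t] by simp
  then have u: "0 \<le> t ^ m" "t ^ m \<le> 1 / 2" using assms by auto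
  have "- (t ^ m) - 2 * (t ^ m) ^ 2 \<le> ln (1 - t ^ m)"
    by (rule ln_one_minus_pos_lower_bound[OF u])
  moreover have "2 * (t ^ m) ^ 2 \<le> t ^ m"
    using mult_left_mono[of "2 * t ^ m" 1 "t ^ m"] u by (simp add: power2_eq_square)
  ultimately show ?thesis
    unfolding edge_weight_def by simp
qed

lemma cycle_potential_numer_decreasing:
  assumes "0 < a" "a < b" "b < 1 / 2" "m \<ge> 1"
  shows "cycle_potential_numer m b < cycle_potential_numer m a"
proof -
  have "\<exists>z>a. z < b \<and> cycle_potential_numer m b - cycle_potential_numer m a =
      (b - a) * (- real m * neg_logit z - real m / z * (2 - edge_weight m z / z ^ m))"
    by (rule MVT2[OF assms(2)], rule cycle_potential_numer_deriv) (use assms in auto)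
  then obtain z where z: "a < z" "z < b" and eq: "cycle_potential_numer m b - cycle_potential_numer m a =
      (b - a) * (- real m * neg_logit z - real m / z * (2 - edge_weight m z / z ^ m))"
    by blast
  have "edge_weight m z / z ^ m \<le> 2"
    using edge_weight_le[of z m] z assms by (simp add: divide_le_eq)
  then have "0 \<le> real m / z * (2 - edge_weight m z / z ^ m)"
    using z assms by (intro mult_nonneg_nonneg) auto
  moreover have "0 < real m * neg_logit z"
    using neg_logit_pos[of z] z assms by simp
  ultimately have "- real m * neg_logit z - real m / z * (2 - edge_weight m z / z ^ m) < 0"
    by simp
  then have "(b - a) * (- real m * neg_logit z - real m / z * (2 - edge_weight m z / z ^ m)) < 0"
    using assms by (intro mult_pos_neg) auto
  with eq show ?thesis
    by linarith
qed

lemma cycle_potential_MVT: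
  assumes "0 < a" "a < b" "b < 1" "m \<ge> 1"
  obtains z c where "a < z" "z < b" "c > 0"
    "cycle_potential m b - cycle_potential m a = c * cycle_potential_numer m z"
proof -
  have "\<exists>z>a. z < b \<and> cycle_potential m b - cycle_potential m a =
      (b - a) * (z ^ m * cycle_potential_numer m z / (z * (1 - z) * (1 - z ^ m)))"
    by (rule MVT2[OF assms(2)], rule cycle_potential_deriv) (use assms in auto)
  then obtain z where z: "a < z" "z < b" and eq: "cycle_potential m b - cycle_potential m a =
      (b - a) * (z ^ m * cycle_potential_numer m z / (z * (1 - z) * (1 - z ^ m)))"
    by blast
  have "z ^ m < 1" using z assms by (intro power_less_one_pos) auto
  then have "(b - a) * z ^ m / (z * (1 - z) * (1 - z ^ m)) > 0"
    using z assms by (intro divide_pos_pos mult_pos_pos) auto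
  moreover have "cycle_potential m b - cycle_potential m a =
      (b - a) * z ^ m / (z * (1 - z) * (1 - z ^ m)) * cycle_potential_numer m z"
    using eq by simp
  ultimately show thesis
    using z that by blast
qed

text \<open>The potential increases and then decreases on \<open>(0, 1/2)\<close>, since the numerator of its
  derivative is decreasing there.\<close>
lemma cycle_potential_unimodal:
  assumes "0 < x1" "x1 \<le> x0" "x0 < y" "y < 1 / 2" "m \<ge> 1"
    and "cycle_potential m x0 \<le> cycle_potential m y"
  shows "cycle_potential m x1 \<le> cycle_potential m x0"
proof -
  have "cycle_potential_numer m x0 > 0"
  proof (rule ccontr)
    assume nonpos: "\<not> cycle_potential_numer m x0 > 0"
    obtain z c where z: "x0 < z" "z < y" and "c > 0"
      and eq: "cycle_potential m y - cycle_potential m x0 = c * cycle_potential_numer m z"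
      using cycle_potential_MVT[of x0 y m] assms by auto
    have "cycle_potential_numer m z < 0"
      using cycle_potential_numer_decreasing[of x0 z m] z assms nonpos by simp
    then have "c * cycle_potential_numer m z < 0"
      using \<open>c > 0\<close> by (simp add: mult_pos_neg)
    with eq assms show False
      by linarith
  qed
  show ?thesis
  proof (cases "x1 = x0")
    case False
    then obtain z c where z: "x1 < z" "z < x0" and "c > 0"
      and eq: "cycle_potential m x0 - cycle_potential m x1 = c * cycle_potential_numer m z"
      using cycle_potential_MVT[of x1 x0 m] assms by auto
    have "cycle_potential_numer m z > 0"
      using cycle_potential_numer_decreasing[of z x0 m] z assms \<open>cycle_potential_numer m x0 > 0\<close>
      by simp
    then have "c * cycle_potential_numer m z > 0"
      using \<open>c > 0\<close> by simp
    with eq show ?thesis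
      by linarith
  qed simp
qed

lemma bp_map_eq_logistic:
  assumes "0 \<le> t" "t < 1" "m \<ge> 1"
  shows "bp_map m d t = 1 / (1 + exp (real d * edge_weight m t))"
proof -
  have q: "0 < 1 - t ^ m"
    using assms power_less_one_pos[of t m] by (cases "t = 0") (auto simp: power_0_left)
  have exp_eq: "exp (real d * edge_weight m t) = 1 / (1 - t ^ m) ^ d"
    using q by (simp add: edge_weight_def exp_of_nat_mult exp_minus power_one_over inverse_eq_divide)
  have "h / (1 + h) = 1 / (1 + 1 / h)" if "0 < h" for h :: real
    using that by (simp add: field_simps)
  then show ?thesis
    unfolding bp_map_def exp_eq using q by simp
qed

lemma logistic_neg_logit: "0 < s \<Longrightarrow> s < 1 \<Longrightarrow> 1 / (1 + exp (neg_logit s)) = s"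
  by (simp add: neg_logit_def exp_diff field_simps)

lemma bp_map_le_iff:
  assumes "0 < t" "t < 1" "0 < s" "s < 1" "m \<ge> 1"
  shows "bp_map m d t \<le> s \<longleftrightarrow> neg_logit s \<le> real d * edge_weight m t"
  using logistic_le_iff[of "real d * edge_weight m t" "neg_logit s"] assms
  by (simp only: bp_map_eq_logistic less_imp_le logistic_neg_logit)

lemma bp_map_ge_iff:
  assumes "0 < t" "t < 1" "0 < s" "s < 1" "m \<ge> 1"
  shows "s \<le> bp_map m d t \<longleftrightarrow> real d * edge_weight m t \<le> neg_logit s"
  using logistic_le_iff[of "neg_logit s" "real d * edge_weight m t"] assms
  by (simp only: bp_map_eq_logistic less_imp_le logistic_neg_logit)

lemma bp_map_antimono_degree: "d \<le> d' \<Longrightarrow> 0 \<le> t \<Longrightarrow> t \<le> 1 \<Longrightarrow> bp_map m d' t \<le> bp_map m d t"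
  unfolding bp_map_def
  by (intro frac_one_plus_mono power_decreasing) (auto simp: power_le_one)

lemma bp_two_cycle_witness_bounds:
  assumes "m \<ge> 1" "d \<ge> 1" "0 \<le> x" "x < y" "y \<le> 1" "y \<le> bp_map m d x" "bp_map m d y \<le> x"
  shows "0 < x" "y < 1 / 2"
proof -
  have "y \<le> 1 / 2"
    using assms bp_map_bounds[of x m d] by linarith
  then have "0 < (1 - y ^ m) ^ d"
    using power_decreasing[of 1 m y] assms by simp
  then have "0 < bp_map m d y"
    unfolding bp_map_def by simp
  then show "0 < x"
    using assms(7) by linarith
  then have "0 < 1 - x ^ m" "1 - x ^ m < 1"
    using power_less_one_pos[of x m] assms by auto
  then have "0 \<le> (1 - x ^ m) ^ d" "(1 - x ^ m) ^ d < 1"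
    using assms(2) by (simp_all add: power_less_one_iff)
  moreover have "h / (1 + h) < 1 / 2" if "0 \<le> h" "h < 1" for h :: real
    using that by (simp add: field_simps)
  ultimately have "bp_map m d x < 1 / 2"
    unfolding bp_map_def by blast
  then show "y < 1 / 2"
    using assms(6) by linarith
qed

text \<open>In logit coordinates the two cycle conditions for \<open>x0 < y\<close> multiply to a comparison of
  the potential at \<open>x0\<close> and \<open>y\<close>, which unimodality carries over to \<open>x1\<close>.\<close>
lemma bp_map_le_of_preimage:
  assumes "m \<ge> 1" "0 < x1" "x1 \<le> x0" "x0 < y" "y < 1 / 2"
    and "y \<le> bp_map m d x0" "bp_map m d y \<le> x0" "bp_map m d' x1 = y"
  shows "bp_map m d' y \<le> x1"
proof -
  have unit: "0 < x1" "x1 < 1" "0 < x0" "x0 < 1" "0 < y" "y < 1"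
    using assms by auto
  have B_pos: "0 < edge_weight m x0" "0 < edge_weight m y" "0 < edge_weight m x1"
    using power_less_one_pos[of _ m] unit assms(1) by (auto simp: edge_weight_def)
  have cyc: "real d * edge_weight m x0 \<le> neg_logit y" "neg_logit x0 \<le> real d * edge_weight m y"
    using assms(1,6,7) unit by (simp_all add: bp_map_ge_iff bp_map_le_iff)
  have pre: "real d' * edge_weight m x1 = neg_logit y"
    using assms(1,8) unit bp_map_ge_iff[of x1 y m d'] bp_map_le_iff[of x1 y m d'] by simp
  have "cycle_potential m x0 \<le> real d * edge_weight m y * edge_weight m x0"
    unfolding cycle_potential_def using cyc(2) B_pos by (intro mult_right_mono) auto
  also have "\<dots> \<le> edge_weight m y * neg_logit y"
    using cyc(1) B_pos by (simp add: mult.commute mult.left_commute)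
  finally have "cycle_potential m x0 \<le> cycle_potential m y"
    by (simp add: cycle_potential_def mult.commute)
  with assms have "neg_logit x1 * edge_weight m x1 \<le> cycle_potential m y"
    using cycle_potential_unimodal[of x1 x0 y m] by (simp add: cycle_potential_def)
  also have "\<dots> = real d' * edge_weight m y * edge_weight m x1"
    unfolding cycle_potential_def pre[symmetric] by simp
  finally have "neg_logit x1 * edge_weight m x1 \<le> real d' * edge_weight m y * edge_weight m x1" .
  then have "neg_logit x1 \<le> real d' * edge_weight m y"
    using B_pos(3) by simp
  then show ?thesis
    using assms(1) unit by (simp add: bp_map_le_iff)
qed

lemma bp_two_cycle_mono:
  assumes "m \<ge> 1" "1 \<le> d" "d \<le> d'" "bp_two_cycle m d"
  shows "bp_two_cycle m d'"
proof -
  obtain x0 y where cyc: "0 \<le> x0" "x0 < y" "y \<le> 1" "y \<le> bp_map m d x0" "bp_map m d y \<le> x0"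
    using assms(4) unfolding bp_two_cycle_def by blast
  note bounds = bp_two_cycle_witness_bounds[OF assms(1,2) cyc]
  have F'_y: "bp_map m d' y \<le> x0"
    using bp_map_antimono_degree[OF assms(3), of y m] cyc by linarith
  show ?thesis
  proof (cases "y \<le> bp_map m d' x0")
    case True
    with cyc F'_y show ?thesis
      unfolding bp_two_cycle_def by blast
  next
    case False
    have "bp_map m d' 0 = 1 / 2"
      using assms(1) by (rule bp_map_0)
    moreover have "continuous_on {0..x0} (bp_map m d')"
      using cyc bounds by (intro continuous_at_imp_continuous_on ballI isCont_bp_map) auto
    ultimately obtain x1 where x1: "0 \<le> x1" "x1 \<le> x0" "bp_map m d' x1 = y"
      using IVT2'[of "bp_map m d'" x0 y 0] False bounds cyc by auto
    with bounds \<open>bp_map m d' 0 = 1 / 2\<close> have "0 < x1"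
      by (cases "x1 = 0") auto
    then have "bp_map m d' y \<le> x1"
      using bp_map_le_of_preimage[OF assms(1) _ x1(2) cyc(2) bounds(2) cyc(4,5) x1(3)] by blast
    with x1 cyc \<open>0 < x1\<close> show ?thesis
      unfolding bp_two_cycle_def by (intro exI[of _ x1] exI[of _ y]) auto
  qed
qed

section \<open>The critical degree\<close>

lemma uniqueness_2: "k \<ge> 2 \<Longrightarrow> uniqueness k 2"
  using uniqueness_iff_no_two_cycle[of k 2] no_bp_two_cycle_1[of "k - 1"] by simp

lemma ex_non_uniqueness:
  assumes "k \<ge> 2"
  shows "\<exists>\<Delta>\<ge>2. \<not> uniqueness k \<Delta>"
proof -
  have "k - 1 \<ge> 1"
    using assms by simp
  then obtain d where "d \<ge> 2" "bp_two_cycle (k - 1) d"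
    using ex_bp_two_cycle by blast
  then have "\<not> uniqueness k (d + 1)"
    using uniqueness_iff_no_two_cycle[OF assms, of "d + 1"] by simp
  then show ?thesis
    using \<open>d \<ge> 2\<close> by (intro exI[of _ "d + 1"]) auto
qed

lemma non_uniqueness_mono:
  assumes "k \<ge> 2" "2 \<le> \<Delta>" "\<Delta> \<le> \<Delta>'" "\<not> uniqueness k \<Delta>"
  shows "\<not> uniqueness k \<Delta>'"
proof -
  have "bp_two_cycle (k - 1) (\<Delta> - 1)"
    using assms uniqueness_iff_no_two_cycle[of k \<Delta>] by simp
  then have "bp_two_cycle (k - 1) (\<Delta>' - 1)"
    by (rule bp_two_cycle_mono[rotated 3]) (use assms in auto)
  then show ?thesis
    using assms uniqueness_iff_no_two_cycle[of k \<Delta>'] by simp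
qed

theorem lemma58:
  fixes k :: nat
  assumes "k \<ge> 2"
  shows "\<exists>\<Delta>c :: real. \<Delta>c \<ge> 3 \<and>
    (\<forall>\<Delta> :: nat. \<Delta> \<ge> 2 \<longrightarrow>
       (real \<Delta> < \<Delta>c \<longrightarrow> uniqueness k \<Delta>) \<and>
       (real \<Delta> > \<Delta>c \<longrightarrow> \<not> uniqueness k \<Delta>))"
proof -
  define non_unique where "non_unique \<Delta> \<longleftrightarrow> 2 \<le> \<Delta> \<and> \<not> uniqueness k \<Delta>" for \<Delta>
  define \<Delta>c where "\<Delta>c = (LEAST \<Delta>. non_unique \<Delta>)"
  obtain \<Delta>0 where "non_unique \<Delta>0"
    using ex_non_uniqueness[OF assms] unfolding non_unique_def by blast
  then have "non_unique \<Delta>c"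
    unfolding \<Delta>c_def by (rule LeastI)
  then have "\<Delta>c \<ge> 3"
    using uniqueness_2[OF assms] by (cases "\<Delta>c = 2") (auto simp: non_unique_def)
  show ?thesis
  proof (intro exI[of _ "real \<Delta>c"] conjI allI impI)
    fix \<Delta> :: nat assume "\<Delta> \<ge> 2"
    show "uniqueness k \<Delta>" if "real \<Delta> < real \<Delta>c"
      using not_less_Least[of \<Delta> non_unique] that \<open>\<Delta> \<ge> 2\<close> by (simp add: \<Delta>c_def non_unique_def)
    show "\<not> uniqueness k \<Delta>" if "real \<Delta> > real \<Delta>c"
      using non_uniqueness_mono[OF assms, of \<Delta>c \<Delta>] \<open>non_unique \<Delta>c\<close> that by (simp add: non_unique_def)
  qed (use \<open>\<Delta>c \<ge> 3\<close> in simp)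
qed

end
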